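(* Let $L$ be a lattice with discriminant $d$, and let $G$ be a finite group acting on $L$ preserving the bilinear form. If $L^G\neq0$, then the restriction of the bilinear form makes $L^G$ a lattice whose discriminant divides $(d|G|)^r$, where $r=\mathrm{rk}(L^G)$.
   Context: A lattice is a free abelian group of finite positive rank with a non-degenerate integral symmetric bilinear form; its discriminant is the determinant of the Gram matrix in a $\mathbb{Z}$-basis. $L^G$ is the subgroup of $G$-invariant elements. *)

theory Defs
  imports "HOL-Algebra.Group" "Jordan_Normal_Form.Determinant"
begin

text \<open>A lattice of rank n is modelled as Z^n (integer vectors of dimension n)
  with the integral symmetric bilinear form b(x,y) = x . (B y) given by its Gram
  matrix B in the standard basis. Its discriminant is det B.\<close>

definition bform :: "int mat \<Rightarrow> int vec \<Rightarrow> int vec \<Rightarrow> int" where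
  "bform B x y = x \<bullet> (B *\<^sub>v y)"

definition is_lattice_gram :: "nat \<Rightarrow> int mat \<Rightarrow> bool" where
  "is_lattice_gram n B \<longleftrightarrow> n > 0 \<and> B \<in> carrier_mat n n \<and> transpose_mat B = B \<and> det B \<noteq> 0"

definition form_preserving_action ::
  "nat \<Rightarrow> int mat \<Rightarrow> ('g, 'b) monoid_scheme \<Rightarrow> ('g \<Rightarrow> int mat) \<Rightarrow> bool" where
  "form_preserving_action n B G \<rho> \<longleftrightarrow>
     (\<forall>g\<in>carrier G. \<rho> g \<in> carrier_mat n n) \<and>
     \<rho> \<one>\<^bsub>G\<^esub> = 1\<^sub>m n \<and>
     (\<forall>g\<in>carrier G. \<forall>h\<in>carrier G. \<rho> (g \<otimes>\<^bsub>G\<^esub> h) = \<rho> g * \<rho> h) \<and>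
     (\<forall>g\<in>carrier G. \<forall>x\<in>carrier_vec n. \<forall>y\<in>carrier_vec n.
        bform B (\<rho> g *\<^sub>v x) (\<rho> g *\<^sub>v y) = bform B x y)"

definition invariants :: "nat \<Rightarrow> ('g, 'b) monoid_scheme \<Rightarrow> ('g \<Rightarrow> int mat) \<Rightarrow> int vec set" where
  "invariants n G \<rho> = {x \<in> carrier_vec n. \<forall>g\<in>carrier G. \<rho> g *\<^sub>v x = x}"

definition zcomb :: "nat \<Rightarrow> (nat \<Rightarrow> int) \<Rightarrow> int vec list \<Rightarrow> int vec" where
  "zcomb n c vs = foldr (\<lambda>i acc. c i \<cdot>\<^sub>v (vs ! i) + acc) [0..<length vs] (0\<^sub>v n)"

definition is_Z_basis :: "nat \<Rightarrow> int vec set \<Rightarrow> int vec list \<Rightarrow> bool" where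
  "is_Z_basis n S vs \<longleftrightarrow>
     set vs \<subseteq> S \<and>
     (\<forall>c. zcomb n c vs = 0\<^sub>v n \<longrightarrow> (\<forall>i<length vs. c i = 0)) \<and>
     (\<forall>x\<in>S. \<exists>c. x = zcomb n c vs)"

definition gram :: "int mat \<Rightarrow> int vec list \<Rightarrow> int mat" where
  "gram B vs = mat (length vs) (length vs) (\<lambda>(i, j). bform B (vs ! i) (vs ! j))"

end

theory Submission
  imports Defs
begin

(* Write M for the invariant sublattice, V for the n x r matrix of a Z-basis of M, N = |G| and
   P = sum of rho(g) over G. The columns of P lie in M, so P = V C for an integral r x n matrix C;
   then C V = N I because P acts on M as multiplication by N, and C rho(g) = C because
   P rho(g) = P. The columns of Y = adj(B) C^T are again G-invariant, since B Y = det B C^T and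
   B rho(g) = rho(g^-1)^T B; hence Y = V U with U integral, and
   Gram(V) U = V^T B Y = det B (C V)^T = det B N I.
   Taking determinants shows that det Gram(V) divides (det B N)^r.
   That M has a Z-basis at all is shown by induction on k for the vectors of M supported on the
   first k coordinates: a basis for k+1 is one for k plus a vector whose (k+1)-st coordinate
   generates the ideal of all (k+1)-st coordinates. *)

lemma foldr_smult_add_vec:
  assumes "set vs \<subseteq> carrier_vec n" "set js \<subseteq> {..<length vs}"
  shows "foldr (\<lambda>i acc. c i \<cdot>\<^sub>v vs ! i + acc) js (0\<^sub>v n) =
    vec n (\<lambda>m. \<Sum>i\<leftarrow>js. c i * vs ! i $ m)"
  using assms(2)
proof (induction js)
  case (Cons j js)
  then have "vs ! j \<in> carrier_vec n" using assms(1) by auto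
  with Cons show ?case by (intro eq_vecI) auto
qed auto

lemma zcomb_eq_vec:
  assumes "set vs \<subseteq> carrier_vec n"
  shows "zcomb n c vs = vec n (\<lambda>m. \<Sum>i<length vs. c i * vs ! i $ m)"
  using foldr_smult_add_vec[OF assms, of "[0..<length vs]" c]
  by (simp add: zcomb_def sum_list_distinct_conv_sum_set atLeast0LessThan)

lemma zcomb_carrier: "set vs \<subseteq> carrier_vec n \<Longrightarrow> zcomb n c vs \<in> carrier_vec n"
  by (simp add: zcomb_eq_vec)

lemma index_zcomb:
  "set vs \<subseteq> carrier_vec n \<Longrightarrow> m < n \<Longrightarrow> zcomb n c vs $ m = (\<Sum>i<length vs. c i * vs ! i $ m)"
  by (simp add: zcomb_eq_vec)

lemma zcomb_cong: "(\<And>i. i < length vs \<Longrightarrow> c i = c' i) \<Longrightarrow> zcomb n c vs = zcomb n c' vs"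
  unfolding zcomb_def by (intro foldr_cong) auto

lemma zcomb_Nil: "zcomb n c [] = 0\<^sub>v n"
  by (simp add: zcomb_def)

lemma zcomb_snoc:
  assumes "set vs \<subseteq> carrier_vec n" "s \<in> carrier_vec n"
  shows "zcomb n c (vs @ [s]) = zcomb n c vs + c (length vs) \<cdot>\<^sub>v s"
  using assms by (intro eq_vecI) (auto simp: zcomb_eq_vec nth_append)

lemma zcomb_eq_mult_mat_vec:
  assumes "set vs \<subseteq> carrier_vec n"
  shows "zcomb n c vs = mat_of_cols n vs *\<^sub>v vec (length vs) c"
  using assms
  by (intro eq_vecI)
    (auto simp: zcomb_eq_vec scalar_prod_def mult.commute atLeast0LessThan mat_of_cols_def
      intro!: sum.cong)

lemma is_Z_basis_zero: "is_Z_basis n {0\<^sub>v n} []"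
  by (simp add: is_Z_basis_def zcomb_Nil)

lemma is_Z_basis_snoc:
  assumes basis: "is_Z_basis n {x \<in> T. x $ k = 0} vs"
    and T: "T \<subseteq> carrier_vec n" "\<And>x y c. x \<in> T \<Longrightarrow> y \<in> T \<Longrightarrow> x + c \<cdot>\<^sub>v y \<in> T"
    and s: "s \<in> T" "s $ k \<noteq> 0" "\<And>x. x \<in> T \<Longrightarrow> s $ k dvd x $ k"
    and k: "k < n"
  shows "is_Z_basis n T (vs @ [s])"
proof -
  have vs: "set vs \<subseteq> T" "\<And>i. i < length vs \<Longrightarrow> vs ! i $ k = 0"
    using basis nth_mem unfolding is_Z_basis_def by blast+
  have vs_carrier: "set vs \<subseteq> carrier_vec n" and s_carrier: "s \<in> carrier_vec n"
    using vs(1) T(1) s(1) by auto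
  have independent: "\<forall>i<length (vs @ [s]). c i = 0" if zero: "zcomb n c (vs @ [s]) = 0\<^sub>v n" for c
  proof -
    have "zcomb n c vs $ k = 0"
      using vs(2) by (simp add: index_zcomb[OF vs_carrier k])
    then have "(zcomb n c (vs @ [s])) $ k = c (length vs) * s $ k"
      using k vs_carrier s_carrier by (simp add: zcomb_snoc zcomb_carrier)
    then have last: "c (length vs) = 0" using s(2) zero k by simp
    moreover have "0 \<cdot>\<^sub>v s = 0\<^sub>v n" using s_carrier by (intro eq_vecI) auto
    ultimately have "zcomb n c vs = 0\<^sub>v n"
      using zero vs_carrier s_carrier by (simp add: zcomb_snoc zcomb_carrier)
    then have "\<forall>i<length vs. c i = 0" using basis unfolding is_Z_basis_def by blast
    with last show ?thesis by (auto simp: less_Suc_eq)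
  qed
  have spanning: "\<exists>c. x = zcomb n c (vs @ [s])" if x: "x \<in> T" for x
  proof -
    define q where "q = x $ k div s $ k"
    define z where "z = x + (- q) \<cdot>\<^sub>v s"
    have "z \<in> T" unfolding z_def using T(2) x s(1) .
    moreover have "z $ k = 0"
      using x s T(1) k by (auto simp: z_def q_def)
    ultimately obtain c where c: "z = zcomb n c vs"
      using basis unfolding is_Z_basis_def by blast
    have "zcomb n (c(length vs := q)) (vs @ [s]) = zcomb n c vs + q \<cdot>\<^sub>v s"
      using zcomb_snoc[OF vs_carrier s_carrier] zcomb_cong[of vs "c(length vs := q)" c] by simp
    also have "\<dots> = x"
      using x T(1) s_carrier by (intro eq_vecI) (auto simp: c[symmetric] z_def)
    finally show ?thesis by metis
  qed
  show ?thesis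
    unfolding is_Z_basis_def using vs(1) s(1) independent spanning by auto
qed

lemma exists_coordinate_generator:
  fixes T :: "int vec set"
  assumes T: "T \<subseteq> carrier_vec n" "\<And>x y c. x \<in> T \<Longrightarrow> y \<in> T \<Longrightarrow> x + c \<cdot>\<^sub>v y \<in> T"
    and x0: "x0 \<in> T" "x0 $ k \<noteq> 0" and k: "k < n"
  shows "\<exists>s\<in>T. s $ k > 0 \<and> (\<forall>x\<in>T. s $ k dvd x $ k)"
proof -
  have "\<exists>x\<in>T. x $ k > 0"
  proof (cases "x0 $ k > 0")
    case False
    have "x0 + (- 2) \<cdot>\<^sub>v x0 \<in> T" using T(2) x0(1) x0(1) .
    moreover have "(x0 + (- 2) \<cdot>\<^sub>v x0) $ k = - x0 $ k" using T(1) x0(1) k by auto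
    ultimately show ?thesis using False x0(2) by (metis neg_0_less_iff_less linorder_neqE)
  qed (use x0 in auto)
  then obtain s where s: "s \<in> T" "s $ k > 0"
    and least: "\<And>x. x \<in> T \<Longrightarrow> x $ k > 0 \<Longrightarrow> nat (s $ k) \<le> nat (x $ k)"
    using ex_has_least_nat[where P = "\<lambda>x. x \<in> T \<and> x $ k > 0" and m = "\<lambda>x. nat (x $ k)"] by blast
  have "s $ k dvd x $ k" if x: "x \<in> T" for x
  proof (rule ccontr)
    assume "\<not> s $ k dvd x $ k"
    then have "x $ k mod s $ k \<noteq> 0" by (simp add: dvd_eq_mod_eq_0)
    then have remainder: "0 < x $ k mod s $ k" "x $ k mod s $ k < s $ k"
      using s(2) by (simp add: order_less_le, simp)
    define z where "z = x + (- (x $ k div s $ k)) \<cdot>\<^sub>v s"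
    have "z \<in> T" unfolding z_def using T(2) x s(1) .
    moreover have "z $ k = x $ k - x $ k div s $ k * s $ k"
      using x s(1) T(1) k by (auto simp: z_def)
    then have "z $ k = x $ k mod s $ k" by (simp add: minus_div_mult_eq_mod)
    ultimately show False using least[of z] remainder by simp
  qed
  with s show ?thesis by blast
qed

lemma exists_Z_basis:
  assumes S: "S \<subseteq> carrier_vec n" "0\<^sub>v n \<in> S" "\<And>x y c. x \<in> S \<Longrightarrow> y \<in> S \<Longrightarrow> x + c \<cdot>\<^sub>v y \<in> S"
  shows "\<exists>vs. is_Z_basis n S vs"
proof -
  define S_below where "S_below k = {x \<in> S. \<forall>i. k \<le> i \<and> i < n \<longrightarrow> x $ i = 0}" for k
  have "\<exists>vs. is_Z_basis n (S_below k) vs" if "k \<le> n" for k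
    using that
  proof (induction k)
    case 0
    have "S_below 0 = {0\<^sub>v n}"
      using S(1,2) by (auto simp: S_below_def intro!: eq_vecI)
    then show ?case using is_Z_basis_zero by metis
  next
    case (Suc k)
    have closed: "x + c \<cdot>\<^sub>v y \<in> S_below (Suc k)"
      if "x \<in> S_below (Suc k)" "y \<in> S_below (Suc k)" for x y c
      using that S(1) S(3)[of x y c] by (auto simp: S_below_def subset_iff)
    have "S_below k = {x \<in> S_below (Suc k). x $ k = 0}"
      unfolding S_below_def using Suc.prems by (fastforce simp: Suc_le_eq dest: le_imp_less_or_eq)
    then obtain vs where vs: "is_Z_basis n {x \<in> S_below (Suc k). x $ k = 0} vs"
      using Suc by auto
    show ?case
    proof (cases "\<exists>x0 \<in> S_below (Suc k). x0 $ k \<noteq> 0")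
      case True
      have "S_below (Suc k) \<subseteq> carrier_vec n" using S(1) by (auto simp: S_below_def)
      with True closed Suc.prems obtain s where "s \<in> S_below (Suc k)" "s $ k > 0"
        "\<forall>x \<in> S_below (Suc k). s $ k dvd x $ k"
        using exists_coordinate_generator[of "S_below (Suc k)" n _ k] by (metis Suc_le_eq)
      then show ?thesis
        using is_Z_basis_snoc[OF vs \<open>S_below (Suc k) \<subseteq> carrier_vec n\<close> closed] Suc.prems
        by (metis Suc_le_eq less_irrefl)
    next
      case False
      then have "{x \<in> S_below (Suc k). x $ k = 0} = S_below (Suc k)" by auto
      with vs show ?thesis by auto
    qed
  qed
  moreover have "S_below n = S" by (auto simp: S_below_def)
  ultimately show ?thesis by blast
qed

lemma is_Z_basis_Nil_subset: "is_Z_basis n S [] \<Longrightarrow> S \<subseteq> {0\<^sub>v n}"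
  by (auto simp: is_Z_basis_def zcomb_Nil)

lemma is_Z_basis_mult_mat_vec_injective:
  assumes basis: "is_Z_basis n S vs" and S: "S \<subseteq> carrier_vec n"
    and w: "w \<in> carrier_vec (length vs)" and zero: "mat_of_cols n vs *\<^sub>v w = 0\<^sub>v n"
  shows "w = 0\<^sub>v (length vs)"
proof -
  have "set vs \<subseteq> carrier_vec n" using basis S by (auto simp: is_Z_basis_def)
  moreover have "vec (length vs) (\<lambda>i. w $ i) = w" using w by auto
  ultimately have "zcomb n (\<lambda>i. w $ i) vs = 0\<^sub>v n"
    using zero by (simp add: zcomb_eq_mult_mat_vec)
  then have "\<forall>i<length vs. w $ i = 0" using basis by (auto simp: is_Z_basis_def)
  with w show ?thesis by (intro eq_vecI) auto
qed

lemma is_Z_basis_spans: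
  assumes basis: "is_Z_basis n S vs" and S: "S \<subseteq> carrier_vec n" and x: "x \<in> S"
  shows "\<exists>w \<in> carrier_vec (length vs). x = mat_of_cols n vs *\<^sub>v w"
proof -
  obtain c where "x = zcomb n c vs" using basis x by (auto simp: is_Z_basis_def)
  moreover have "set vs \<subseteq> carrier_vec n" using basis S by (auto simp: is_Z_basis_def)
  ultimately show ?thesis by (auto simp: zcomb_eq_mult_mat_vec)
qed

lemma mult_left_cancel_mat:
  fixes V :: "'a :: ring mat"
  assumes V: "V \<in> carrier_mat n r"
    and inj: "\<And>w. w \<in> carrier_vec r \<Longrightarrow> V *\<^sub>v w = 0\<^sub>v n \<Longrightarrow> w = 0\<^sub>v r"
    and X: "X \<in> carrier_mat r k" and Y: "Y \<in> carrier_mat r k"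
    and eq: "V * X = V * Y"
  shows "X = Y"
proof (rule mat_col_eqI)
  fix j
  assume "j < dim_col Y"
  then have j: "j < k" using Y by simp
  have "V *\<^sub>v (col X j - col Y j) = V *\<^sub>v col X j - V *\<^sub>v col Y j"
    using V X Y j by (intro mult_minus_distrib_mat_vec) auto
  also have "\<dots> = col (V * X) j - col (V * Y) j"
    by (simp only: col_mult2[OF V X j] col_mult2[OF V Y j])
  also have "\<dots> = 0\<^sub>v n"
    using eq V Y by (simp add: carrier_vecI)
  finally have "col X j - col Y j = 0\<^sub>v r"
    by (rule inj[rotated]) (use X Y in \<open>simp add: carrier_vecI\<close>)
  show "col X j = col Y j"
  proof (rule eq_vecI)
    fix i
    assume "i < dim_vec (col Y j)"
    then have "(col X j - col Y j) $ i = 0" "i < r"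
      using \<open>col X j - col Y j = 0\<^sub>v r\<close> Y by auto
    then show "col X j $ i = col Y j $ i" using X Y by simp
  qed (use X Y in simp)
qed (use X Y in auto)

lemma mat_factor_through_cols:
  assumes V: "V \<in> carrier_mat n r" and A: "A \<in> carrier_mat n k"
    and cols: "\<And>j. j < k \<Longrightarrow> \<exists>w \<in> carrier_vec r. col A j = V *\<^sub>v w"
  shows "\<exists>C \<in> carrier_mat r k. A = V * C"
proof -
  have "\<forall>j\<in>{..<k}. \<exists>w. w \<in> carrier_vec r \<and> col A j = V *\<^sub>v w"
    using cols by blast
  from bchoice[OF this] obtain w where w: "\<forall>j\<in>{..<k}. w j \<in> carrier_vec r \<and> col A j = V *\<^sub>v w j"
    by blast
  define C where "C = mat_of_cols r (map w [0..<k])"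
  have C: "C \<in> carrier_mat r k"
    using mat_of_cols_carrier[of r "map w [0..<k]"] by (simp add: C_def)
  have "A = V * C"
  proof (rule mat_col_eqI)
    fix j
    assume "j < dim_col (V * C)"
    then have j: "j < k" using C by simp
    then have "col C j = w j" using w by (simp add: C_def)
    then show "col A j = col (V * C) j" using w j col_mult2[OF V C j] by simp
  qed (use V A C in simp_all)
  with C show ?thesis by blast
qed

lemma gram_eq_transpose_mult:
  assumes "set vs \<subseteq> carrier_vec n" "B \<in> carrier_mat n n"
  shows "gram B vs = transpose_mat (mat_of_cols n vs) * B * mat_of_cols n vs"
proof -
  let ?V = "mat_of_cols n vs"
  have "?V \<in> carrier_mat n (length vs)" by simp
  then have "transpose_mat ?V * B * ?V = transpose_mat ?V * (B * ?V)"
    using assms(2) by (intro assoc_mult_mat) auto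
  also have "\<dots> = gram B vs"
  proof (rule eq_matI)
    fix i j
    assume "i < dim_row (gram B vs)" "j < dim_col (gram B vs)"
    then have "i < length vs" "j < length vs" by (auto simp: gram_def)
    moreover have "col ?V j = vs ! j" if "j < length vs" for j
      using that assms(1) by (meson col_mat_of_cols nth_mem subsetD)
    moreover have "col (B * ?V) j = B *\<^sub>v col ?V j" if "j < length vs" for j
      using col_mult2[OF assms(2) mat_of_cols_carrier(1) that] .
    ultimately show "(transpose_mat ?V * (B * ?V)) $$ (i, j) = gram B vs $$ (i, j)"
      using assms by (auto simp: gram_def bform_def)
  qed (auto simp: gram_def)
  finally show ?thesis by simp
qed

lemma transpose_mult_mult_eq_if_preserves_bform:
  assumes A: "A \<in> carrier_mat n n" and B: "B \<in> carrier_mat n n"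
    and preserves: "\<And>x y. x \<in> carrier_vec n \<Longrightarrow> y \<in> carrier_vec n \<Longrightarrow>
      bform B (A *\<^sub>v x) (A *\<^sub>v y) = bform B x y"
  shows "transpose_mat A * B * A = B"
proof -
  \<comment> \<open>Both sides are Gram matrices: of the columns of A and of the unit vectors.\<close>
  have cols_carrier: "set (cols A) \<subseteq> carrier_vec n" "set (cols (1\<^sub>m n)) \<subseteq> carrier_vec n"
    using A by (auto simp: cols_def)
  have "transpose_mat A * B * A = gram B (cols A)"
    using gram_eq_transpose_mult[OF cols_carrier(1) B] mat_of_cols_cols[of A] A by simp
  also have "\<dots> = gram B (cols (1\<^sub>m n))"
  proof (rule eq_matI)
    fix i j
    assume "i < dim_row (gram B (cols (1\<^sub>m n)))" "j < dim_col (gram B (cols (1\<^sub>m n)))"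
    then have ij: "i < n" "j < n" by (simp_all add: gram_def)
    have "col A l = A *\<^sub>v unit_vec n l" if "l < n" for l
      using A that by (metis col_mult2 col_one one_carrier_mat right_mult_one_mat)
    then show "gram B (cols A) $$ (i, j) = gram B (cols (1\<^sub>m n)) $$ (i, j)"
      using ij A preserves by (simp add: gram_def)
  qed (use A in \<open>simp_all add: gram_def\<close>)
  also have "\<dots> = transpose_mat (1\<^sub>m n) * B * 1\<^sub>m n"
    using gram_eq_transpose_mult[OF cols_carrier(2) B]
    by (simp only: mat_of_cols_cols[of "1\<^sub>m n", unfolded index_one_mat(2)])
  also have "\<dots> = B" using B by simp
  finally show ?thesis .
qed

lemma mult_adj_mult:
  assumes "B \<in> carrier_mat n n" "A \<in> carrier_mat n k"
  shows "B * (adj_mat B * A) = det B \<cdot>\<^sub>m A"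
proof -
  have "B * (adj_mat B * A) = B * adj_mat B * A"
    using assms adj_mat(1) by (intro assoc_mult_mat[symmetric]) auto
  also have "\<dots> = det B \<cdot>\<^sub>m A"
    using mult_smult_assoc_mat[OF one_carrier_mat assms(2)] assms(2)
    by (simp add: adj_mat(2)[OF assms(1)])
  finally show ?thesis .
qed

lemma invariants_carrier: "invariants n G \<rho> \<subseteq> carrier_vec n"
  by (auto simp: invariants_def)

locale int_representation = group G for G :: "('g, 'b) monoid_scheme" (structure) +
  fixes n :: nat and \<rho> :: "'g \<Rightarrow> int mat"
  assumes finite_carrier: "finite (carrier G)"
    and rep_carrier: "g \<in> carrier G \<Longrightarrow> \<rho> g \<in> carrier_mat n n"
    and rep_one: "\<rho> \<one>\<^bsub>G\<^esub> = 1\<^sub>m n"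
    and rep_mult: "g \<in> carrier G \<Longrightarrow> h \<in> carrier G \<Longrightarrow> \<rho> (g \<otimes>\<^bsub>G\<^esub> h) = \<rho> g * \<rho> h"
begin

lemma rep_dim [simp]: "g \<in> carrier G \<Longrightarrow> dim_row (\<rho> g) = n" "g \<in> carrier G \<Longrightarrow> dim_col (\<rho> g) = n"
  using rep_carrier by auto

lemma rep_inv_mult: "g \<in> carrier G \<Longrightarrow> \<rho> (inv g) * \<rho> g = 1\<^sub>m n"
  using rep_mult[of "inv g" g] rep_one by simp

lemma sum_reindex_mult_left: "c \<in> carrier G \<Longrightarrow> (\<Sum>g\<in>carrier G. f (c \<otimes> g)) = (\<Sum>g\<in>carrier G. f g)"
  by (rule sum.reindex_bij_witness[where i = "\<lambda>g. inv c \<otimes> g" and j = "\<lambda>g. c \<otimes> g"])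
    (auto simp: m_assoc[symmetric])

lemma sum_reindex_mult_right: "c \<in> carrier G \<Longrightarrow> (\<Sum>g\<in>carrier G. f (g \<otimes> c)) = (\<Sum>g\<in>carrier G. f g)"
  by (rule sum.reindex_bij_witness[where i = "\<lambda>g. g \<otimes> inv c" and j = "\<lambda>g. g \<otimes> c"])
    (auto simp: m_assoc)

lemma zero_mem_invariants: "0\<^sub>v n \<in> invariants n G \<rho>"
proof -
  have "\<rho> g *\<^sub>v 0\<^sub>v n = 0\<^sub>v n" if "g \<in> carrier G" for g
    using rep_carrier[OF that] by auto
  then show ?thesis by (simp add: invariants_def)
qed

lemma add_smult_mem_invariants:
  assumes "x \<in> invariants n G \<rho>" "y \<in> invariants n G \<rho>"
  shows "x + c \<cdot>\<^sub>v y \<in> invariants n G \<rho>"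
proof -
  have "\<rho> g *\<^sub>v (x + c \<cdot>\<^sub>v y) = x + c \<cdot>\<^sub>v y" if g: "g \<in> carrier G" for g
  proof -
    have "x \<in> carrier_vec n" "y \<in> carrier_vec n" "\<rho> g *\<^sub>v x = x" "\<rho> g *\<^sub>v y = y"
      using assms g by (auto simp: invariants_def)
    moreover have "\<rho> g *\<^sub>v (c \<cdot>\<^sub>v y) = c \<cdot>\<^sub>v (\<rho> g *\<^sub>v y)"
      using rep_carrier[OF g] \<open>y \<in> carrier_vec n\<close> by (intro eq_vecI) auto
    ultimately show ?thesis
      using rep_carrier[OF g] by (simp add: mult_add_distrib_mat_vec)
  qed
  with assms show ?thesis by (auto simp: invariants_def)
qed

lemma col_mem_invariants:
  assumes "A \<in> carrier_mat n k" "\<And>g. g \<in> carrier G \<Longrightarrow> \<rho> g * A = A" "j < k"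
  shows "col A j \<in> invariants n G \<rho>"
proof -
  have "\<rho> g *\<^sub>v col A j = col A j" if "g \<in> carrier G" for g
    using col_mult2[OF rep_carrier[OF that] assms(1,3)] assms(2)[OF that] by simp
  moreover have "col A j \<in> carrier_vec n" using assms(1) by (simp add: carrier_vecI)
  ultimately show ?thesis by (simp add: invariants_def)
qed

definition orbit_sum :: "int mat" where
  "orbit_sum = mat n n (\<lambda>ij. \<Sum>g\<in>carrier G. \<rho> g $$ ij)"

lemma orbit_sum_carrier: "orbit_sum \<in> carrier_mat n n"
  by (simp add: orbit_sum_def)

lemma mult_orbit_sum:
  assumes "A \<in> carrier_mat k n"
  shows "A * orbit_sum = mat k n (\<lambda>ij. \<Sum>g\<in>carrier G. (A * \<rho> g) $$ ij)"
proof (rule eq_matI)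
  fix i j
  assume "i < dim_row (mat k n (\<lambda>ij. \<Sum>g\<in>carrier G. (A * \<rho> g) $$ ij))"
    "j < dim_col (mat k n (\<lambda>ij. \<Sum>g\<in>carrier G. (A * \<rho> g) $$ ij))"
  then have ij: "i < k" "j < n" by auto
  have "(A * orbit_sum) $$ (i, j) = (\<Sum>l<n. A $$ (i, l) * (\<Sum>g\<in>carrier G. \<rho> g $$ (l, j)))"
    using assms ij by (simp add: orbit_sum_def scalar_prod_def atLeast0LessThan)
  also have "\<dots> = (\<Sum>l<n. \<Sum>g\<in>carrier G. A $$ (i, l) * \<rho> g $$ (l, j))"
    by (simp add: sum_distrib_left)
  also have "\<dots> = (\<Sum>g\<in>carrier G. \<Sum>l<n. A $$ (i, l) * \<rho> g $$ (l, j))"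
    by (rule sum.swap)
  also have "\<dots> = (\<Sum>g\<in>carrier G. (A * \<rho> g) $$ (i, j))"
    using assms ij rep_carrier by (intro sum.cong) (auto simp: scalar_prod_def atLeast0LessThan)
  finally show "(A * orbit_sum) $$ (i, j) = mat k n (\<lambda>ij. \<Sum>g\<in>carrier G. (A * \<rho> g) $$ ij) $$ (i, j)"
    using ij by simp
qed (use assms in \<open>simp_all add: orbit_sum_def\<close>)

lemma orbit_sum_mult:
  assumes "A \<in> carrier_mat n k"
  shows "orbit_sum * A = mat n k (\<lambda>ij. \<Sum>g\<in>carrier G. (\<rho> g * A) $$ ij)"
proof (rule eq_matI)
  fix i j
  assume "i < dim_row (mat n k (\<lambda>ij. \<Sum>g\<in>carrier G. (\<rho> g * A) $$ ij))"
    "j < dim_col (mat n k (\<lambda>ij. \<Sum>g\<in>carrier G. (\<rho> g * A) $$ ij))"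
  then have ij: "i < n" "j < k" by auto
  have "(orbit_sum * A) $$ (i, j) = (\<Sum>l<n. (\<Sum>g\<in>carrier G. \<rho> g $$ (i, l)) * A $$ (l, j))"
    using assms ij by (simp add: orbit_sum_def scalar_prod_def atLeast0LessThan)
  also have "\<dots> = (\<Sum>l<n. \<Sum>g\<in>carrier G. \<rho> g $$ (i, l) * A $$ (l, j))"
    by (simp add: sum_distrib_right)
  also have "\<dots> = (\<Sum>g\<in>carrier G. \<Sum>l<n. \<rho> g $$ (i, l) * A $$ (l, j))"
    by (rule sum.swap)
  also have "\<dots> = (\<Sum>g\<in>carrier G. (\<rho> g * A) $$ (i, j))"
    using assms ij rep_carrier by (intro sum.cong) (auto simp: scalar_prod_def atLeast0LessThan)
  finally show "(orbit_sum * A) $$ (i, j) = mat n k (\<lambda>ij. \<Sum>g\<in>carrier G. (\<rho> g * A) $$ ij) $$ (i, j)"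
    using ij by simp
qed (use assms in \<open>simp_all add: orbit_sum_def\<close>)

lemma rep_mult_orbit_sum:
  assumes h: "h \<in> carrier G"
  shows "\<rho> h * orbit_sum = orbit_sum"
proof -
  have "(\<Sum>g\<in>carrier G. (\<rho> h * \<rho> g) $$ ij) = (\<Sum>g\<in>carrier G. \<rho> g $$ ij)" for ij
  proof -
    have "(\<Sum>g\<in>carrier G. (\<rho> h * \<rho> g) $$ ij) = (\<Sum>g\<in>carrier G. \<rho> (h \<otimes> g) $$ ij)"
      using h by (intro sum.cong) (simp_all add: rep_mult)
    also have "\<dots> = (\<Sum>g\<in>carrier G. \<rho> g $$ ij)"
      using h by (rule sum_reindex_mult_left)
    finally show ?thesis .
  qed
  then show ?thesis
    using mult_orbit_sum[OF rep_carrier[OF h]] by (simp add: orbit_sum_def)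
qed

lemma orbit_sum_mult_rep:
  assumes h: "h \<in> carrier G"
  shows "orbit_sum * \<rho> h = orbit_sum"
proof -
  have "(\<Sum>g\<in>carrier G. (\<rho> g * \<rho> h) $$ ij) = (\<Sum>g\<in>carrier G. \<rho> g $$ ij)" for ij
  proof -
    have "(\<Sum>g\<in>carrier G. (\<rho> g * \<rho> h) $$ ij) = (\<Sum>g\<in>carrier G. \<rho> (g \<otimes> h) $$ ij)"
      using h by (intro sum.cong) (simp_all add: rep_mult)
    also have "\<dots> = (\<Sum>g\<in>carrier G. \<rho> g $$ ij)"
      using h by (rule sum_reindex_mult_right)
    finally show ?thesis .
  qed
  then show ?thesis
    using orbit_sum_mult[OF rep_carrier[OF h]] by (simp add: orbit_sum_def)
qed

lemma orbit_sum_mult_invariant_cols: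
  assumes A: "A \<in> carrier_mat n k" and cols: "\<And>j. j < k \<Longrightarrow> col A j \<in> invariants n G \<rho>"
  shows "orbit_sum * A = int (card (carrier G)) \<cdot>\<^sub>m A"
proof (rule eq_matI)
  fix i j
  assume "i < dim_row (int (card (carrier G)) \<cdot>\<^sub>m A)" "j < dim_col (int (card (carrier G)) \<cdot>\<^sub>m A)"
  then have ij: "i < n" "j < k" using A by auto
  have "(\<rho> g * A) $$ (i, j) = A $$ (i, j)" if g: "g \<in> carrier G" for g
  proof -
    have "(\<rho> g * A) $$ (i, j) = (\<rho> g *\<^sub>v col A j) $ i"
      using ij A g by simp
    also have "\<dots> = col A j $ i"
      using cols[OF ij(2)] g by (simp add: invariants_def)
    finally show ?thesis using ij A by simp
  qed
  then show "(orbit_sum * A) $$ (i, j) = (int (card (carrier G)) \<cdot>\<^sub>m A) $$ (i, j)"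
    using orbit_sum_mult[OF A] ij A by simp
qed (use A in \<open>simp_all add: orbit_sum_def\<close>)

lemma mult_rep_eq_transpose_rep_inv_mult:
  assumes B: "B \<in> carrier_mat n n"
    and preserves: "\<And>g. g \<in> carrier G \<Longrightarrow> transpose_mat (\<rho> g) * B * \<rho> g = B"
    and g: "g \<in> carrier G"
  shows "B * \<rho> g = transpose_mat (\<rho> (inv g)) * B"
proof -
  let ?R = "\<rho> (inv g)"
  have R: "?R \<in> carrier_mat n n" "transpose_mat ?R \<in> carrier_mat n n"
    using rep_carrier[of "inv g"] g by auto
  have "B * \<rho> g = transpose_mat ?R * B * ?R * \<rho> g"
    using preserves[of "inv g"] g by simp
  also have "\<dots> = transpose_mat ?R * B * (?R * \<rho> g)"
    using R B rep_carrier[OF g] by (intro assoc_mult_mat) auto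
  also have "\<dots> = transpose_mat ?R * B"
    using R B g by (simp add: rep_inv_mult)
  finally show ?thesis .
qed

lemma rep_mult_adj_mult_transpose:
  assumes B: "B \<in> carrier_mat n n" "det B \<noteq> 0"
    and preserves: "\<And>g. g \<in> carrier G \<Longrightarrow> transpose_mat (\<rho> g) * B * \<rho> g = B"
    and C: "C \<in> carrier_mat k n" "\<And>g. g \<in> carrier G \<Longrightarrow> C * \<rho> g = C"
    and g: "g \<in> carrier G"
  shows "\<rho> g * (adj_mat B * transpose_mat C) = adj_mat B * transpose_mat C"
proof -
  let ?Y = "adj_mat B * transpose_mat C" and ?R = "\<rho> (inv g)"
  have carriers: "adj_mat B \<in> carrier_mat n n" "transpose_mat C \<in> carrier_mat n k"
    "?Y \<in> carrier_mat n k" "?R \<in> carrier_mat n n" "\<rho> g \<in> carrier_mat n n"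
    using adj_mat(1)[OF B(1)] C(1) rep_carrier g by auto
  have BY: "B * ?Y = det B \<cdot>\<^sub>m transpose_mat C"
    by (rule mult_adj_mult[OF B(1) carriers(2)])
  have "B * (\<rho> g * ?Y) = B * \<rho> g * ?Y"
    by (rule assoc_mult_mat[symmetric, OF B(1) carriers(5,3)])
  also have "\<dots> = transpose_mat ?R * B * ?Y"
    by (simp add: mult_rep_eq_transpose_rep_inv_mult[OF B(1) preserves g])
  also have "\<dots> = transpose_mat ?R * (B * ?Y)"
    using carriers(4) by (intro assoc_mult_mat[OF _ B(1) carriers(3)]) simp
  also have "\<dots> = det B \<cdot>\<^sub>m transpose_mat (C * ?R)"
    using carriers C(1) by (simp add: BY transpose_mult mult_smult_distrib)
  also have "\<dots> = B * ?Y"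
    using C(2)[of "inv g"] g by (simp add: BY)
  finally have "B * (\<rho> g * ?Y) = B * ?Y" .
  then show ?thesis
    using mult_left_cancel_mat[OF B(1) _ mult_carrier_mat[OF carriers(5,3)] carriers(3)]
      det_0_iff_vec_prod_zero[OF B(1)] B(2) by blast
qed

end

locale invariant_lattice_basis = int_representation +
  fixes vs :: "int vec list"
  assumes basis: "is_Z_basis n (invariants n G \<rho>) vs"
begin

lemma basis_carrier: "set vs \<subseteq> carrier_vec n"
  using basis invariants_carrier[of n G \<rho>] unfolding is_Z_basis_def by blast

lemma col_basis_mat_mem_invariants:
  assumes "j < length vs"
  shows "col (mat_of_cols n vs) j \<in> invariants n G \<rho>"
proof -
  have "vs ! j \<in> invariants n G \<rho>" using basis assms nth_mem by (auto simp: is_Z_basis_def)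
  with assms basis_carrier show ?thesis by (simp add: subset_iff)
qed

lemma basis_mult_left_cancel:
  assumes "X \<in> carrier_mat (length vs) k" "Y \<in> carrier_mat (length vs) k"
    and "mat_of_cols n vs * X = mat_of_cols n vs * Y"
  shows "X = Y"
  using mult_left_cancel_mat[OF mat_of_cols_carrier(1) _ assms]
    is_Z_basis_mult_mat_vec_injective[OF basis invariants_carrier] by blast

lemma factor_through_basis:
  assumes "A \<in> carrier_mat n k" "\<And>j. j < k \<Longrightarrow> col A j \<in> invariants n G \<rho>"
  shows "\<exists>C \<in> carrier_mat (length vs) k. A = mat_of_cols n vs * C"
  using assms is_Z_basis_spans[OF basis invariants_carrier]
  by (intro mat_factor_through_cols[OF mat_of_cols_carrier(1)]) auto

lemma orbit_sum_factorization:
  obtains C where "C \<in> carrier_mat (length vs) n"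
    and "C * mat_of_cols n vs = int (card (carrier G)) \<cdot>\<^sub>m 1\<^sub>m (length vs)"
    and "\<And>g. g \<in> carrier G \<Longrightarrow> C * \<rho> g = C"
proof -
  let ?V = "mat_of_cols n vs" and ?N = "int (card (carrier G))"
  have V: "?V \<in> carrier_mat n (length vs)" by simp
  obtain C where C: "C \<in> carrier_mat (length vs) n" and P: "orbit_sum = ?V * C"
    using factor_through_basis[OF orbit_sum_carrier
        col_mem_invariants[OF orbit_sum_carrier rep_mult_orbit_sum]]
    by blast
  have "?V * (C * ?V) = orbit_sum * ?V"
    unfolding P by (rule assoc_mult_mat[symmetric, OF V C V])
  also have "\<dots> = ?N \<cdot>\<^sub>m ?V"
    by (intro orbit_sum_mult_invariant_cols[OF V] col_basis_mat_mem_invariants)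
  also have "\<dots> = ?V * (?N \<cdot>\<^sub>m 1\<^sub>m (length vs))"
    by (simp add: mult_smult_distrib[OF V one_carrier_mat] right_mult_one_mat[OF V])
  finally have "C * ?V = ?N \<cdot>\<^sub>m 1\<^sub>m (length vs)"
    by (rule basis_mult_left_cancel[OF mult_carrier_mat[OF C V]
          smult_carrier_mat[OF one_carrier_mat]])
  moreover have "C * \<rho> g = C" if g: "g \<in> carrier G" for g
  proof -
    have "?V * (C * \<rho> g) = orbit_sum * \<rho> g"
      unfolding P by (rule assoc_mult_mat[symmetric, OF V C rep_carrier[OF g]])
    also have "\<dots> = ?V * C" using g by (simp add: orbit_sum_mult_rep P[symmetric])
    finally show ?thesis
      by (rule basis_mult_left_cancel[OF mult_carrier_mat[OF C rep_carrier[OF g]] C])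
  qed
  ultimately show ?thesis using C that by blast
qed

lemma gram_mult_eq_smult_one:
  assumes B: "B \<in> carrier_mat n n" "det B \<noteq> 0"
    and preserves: "\<And>g. g \<in> carrier G \<Longrightarrow> transpose_mat (\<rho> g) * B * \<rho> g = B"
  obtains U where "U \<in> carrier_mat (length vs) (length vs)"
    and "gram B vs * U = (det B * int (card (carrier G))) \<cdot>\<^sub>m 1\<^sub>m (length vs)"
proof -
  let ?V = "mat_of_cols n vs" and ?N = "int (card (carrier G))" and ?r = "length vs"
  obtain C where C: "C \<in> carrier_mat ?r n" "C * ?V = ?N \<cdot>\<^sub>m 1\<^sub>m ?r"
    and C_invariant: "\<And>g. g \<in> carrier G \<Longrightarrow> C * \<rho> g = C"
    using orbit_sum_factorization by blast
  define Y where "Y = adj_mat B * transpose_mat C"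
  have V: "?V \<in> carrier_mat n ?r" and Y: "Y \<in> carrier_mat n ?r"
    using adj_mat(1)[OF B(1)] C(1) by (auto simp: Y_def)
  obtain U where U: "U \<in> carrier_mat ?r ?r" and YU: "Y = ?V * U"
    using factor_through_basis[OF Y col_mem_invariants[OF Y]]
      rep_mult_adj_mult_transpose[OF B preserves C(1) C_invariant]
    by (auto simp: Y_def)
  have "gram B vs * U = transpose_mat ?V * B * ?V * U"
    using gram_eq_transpose_mult[OF basis_carrier B(1)] by simp
  also have "\<dots> = transpose_mat ?V * B * Y"
    using V U B(1) unfolding YU by (intro assoc_mult_mat[of _ ?r n]) auto
  also have "\<dots> = transpose_mat ?V * (B * Y)"
    using V Y B(1) by (intro assoc_mult_mat) auto
  also have "\<dots> = transpose_mat ?V * (det B \<cdot>\<^sub>m transpose_mat C)"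
    using C(1) by (simp add: Y_def mult_adj_mult[OF B(1)])
  also have "\<dots> = det B \<cdot>\<^sub>m transpose_mat (C * ?V)"
    using mult_smult_distrib[of "transpose_mat ?V" ?r n "transpose_mat C" ?r]
      transpose_mult[OF C(1) V] C(1)
    by simp
  also have "\<dots> = (det B * ?N) \<cdot>\<^sub>m 1\<^sub>m ?r"
    unfolding C(2) by (intro eq_matI) auto
  finally show ?thesis using U that by blast
qed

lemma det_gram_dvd:
  assumes B: "B \<in> carrier_mat n n" "det B \<noteq> 0"
    and preserves: "\<And>g. g \<in> carrier G \<Longrightarrow> transpose_mat (\<rho> g) * B * \<rho> g = B"
  shows "det (gram B vs) \<noteq> 0 \<and> det (gram B vs) dvd (det B * int (card (carrier G))) ^ length vs"
proof -
  obtain U where U: "U \<in> carrier_mat (length vs) (length vs)"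
    and GU: "gram B vs * U = (det B * int (card (carrier G))) \<cdot>\<^sub>m 1\<^sub>m (length vs)"
    using gram_mult_eq_smult_one[OF B preserves] by blast
  have "det (gram B vs) * det U = (det B * int (card (carrier G))) ^ length vs"
    using det_mult[OF _ U, of "gram B vs"] GU by (simp add: gram_def)
  moreover have "card (carrier G) \<noteq> 0"
    using finite_carrier one_closed by auto
  ultimately show ?thesis
    using B(2) by (metis dvd_triv_left mult_eq_0_iff of_nat_eq_0_iff power_not_zero)
qed

end

theorem lemma2p1:
  fixes G :: "('g, 'b) monoid_scheme" and \<rho> :: "'g \<Rightarrow> int mat"
    and B :: "int mat" and n :: nat
  assumes "group G"
    and "finite (carrier G)"
    and "is_lattice_gram n B"
    and "form_preserving_action n B G \<rho>"
    and "invariants n G \<rho> \<noteq> {0\<^sub>v n}"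
  shows "(\<exists>vs. is_Z_basis n (invariants n G \<rho>) vs) \<and>
         (\<forall>vs. is_Z_basis n (invariants n G \<rho>) vs \<longrightarrow>
              length vs > 0 \<and> det (gram B vs) \<noteq> 0 \<and>
              det (gram B vs) dvd (det B * int (card (carrier G))) ^ length vs)"
proof -
  interpret int_representation G n \<rho>
    using assms(1,2,4)
    by (intro int_representation.intro int_representation_axioms.intro)
      (auto simp: form_preserving_action_def)
  have B: "B \<in> carrier_mat n n" "det B \<noteq> 0"
    using assms(3) by (auto simp: is_lattice_gram_def)
  have preserves: "transpose_mat (\<rho> g) * B * \<rho> g = B" if "g \<in> carrier G" for g
    using assms(4) that B(1)
    by (intro transpose_mult_mult_eq_if_preserves_bform) (auto simp: form_preserving_action_def)
  show ?thesis
  proof (intro conjI allI impI)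
    show "\<exists>vs. is_Z_basis n (invariants n G \<rho>) vs"
      by (rule exists_Z_basis[OF invariants_carrier zero_mem_invariants add_smult_mem_invariants])
    fix vs
    assume basis: "is_Z_basis n (invariants n G \<rho>) vs"
    then interpret invariant_lattice_basis G n \<rho> vs by unfold_locales
    show "length vs > 0"
      using basis is_Z_basis_Nil_subset zero_mem_invariants assms(5) by auto
    show "det (gram B vs) \<noteq> 0" "det (gram B vs) dvd (det B * int (card (carrier G))) ^ length vs"
      using det_gram_dvd[OF B preserves] by auto
  qed
qed

end
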